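(* Let $L$ be a positive integer and let $a,b,s$ be integers with $a\mid L$, $b\mid L$, $0\le s<b$ and $s\in\frac{ab}{\gcd(ab,L)}\mathbb{Z}$. Let $k_1,k_2\in\mathbb{Z}$ satisfy $k_1s+k_2b=\gcd(b,s)$, and set $\tilde b=\gcd(b,s)$, $\tilde a=ab/\gcd(b,s)$, $\tilde s=k_1a$. Then $$\begin{pmatrix} a & 0\\ s & b\end{pmatrix}\mathbb{Z}_L^2=\begin{pmatrix} \tilde a & \tilde s\\ 0 & \tilde b\end{pmatrix}\mathbb{Z}_L^2 .$$
   Context: $\mathbb{Z}_L=\mathbb{Z}/L\mathbb{Z}$; for an integer matrix $A$, $A\mathbb{Z}_L^2=\{Az\bmod L: z\in\mathbb{Z}_L^2\}$. Here $\gcd(b,0)=b$. *)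

theory Defs
  imports Main
begin

definition mat_image_ZL :: "int \<Rightarrow> int \<Rightarrow> int \<Rightarrow> int \<Rightarrow> int \<Rightarrow> (int \<times> int) set" where
  "mat_image_ZL L p q r t =
     {((p * x + q * y) mod L, (r * x + t * y) mod L) | x y. x \<in> {0..<L} \<and> y \<in> {0..<L}}"

end

theory Submission
  imports Defs
begin

text \<open>With \<open>g = gcd b s\<close>, \<open>b = g b'\<close>, \<open>s = g s'\<close> and \<open>k1 s' + k2 b' = 1\<close>, the two matrices are
related by \<open>A = A' U\<close> and \<open>A' = A V\<close> for the integer matrices \<open>U = (k2, -k1; s', b')\<close> and
\<open>V = (b', k1; -s', k2)\<close>. Since \<open>A U \<int>\<^sub>L\<^sup>2 \<subseteq> A \<int>\<^sub>L\<^sup>2\<close> for every integer matrix \<open>U\<close>, the two images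
coincide.\<close>

lemma mat_image_ZL_conv_all_int:
  assumes "L > 0"
  shows "mat_image_ZL L p q r t = {((p * x + q * y) mod L, (r * x + t * y) mod L) | x y. True}"
proof -
  have "((p * x + q * y) mod L, (r * x + t * y) mod L) \<in> mat_image_ZL L p q r t" for x y
  proof -
    have "(p * x + q * y) mod L = (p * (x mod L) + q * (y mod L)) mod L"
      by (metis mod_add_cong mod_mult_right_eq)
    moreover have "(r * x + t * y) mod L = (r * (x mod L) + t * (y mod L)) mod L"
      by (metis mod_add_cong mod_mult_right_eq)
    ultimately show ?thesis unfolding mat_image_ZL_def using assms
      by (intro CollectI exI[of _ "x mod L"] exI[of _ "y mod L"]) auto
  qed
  then show ?thesis unfolding mat_image_ZL_def by blast
qed

lemma mat_image_ZL_mult_right_subset: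
  assumes "L > 0"
    and "p = p' * u + q' * w" "q = p' * v + q' * z"
    and "r = r' * u + t' * w" "t = r' * v + t' * z"
  shows "mat_image_ZL L p q r t \<subseteq> mat_image_ZL L p' q' r' t'"
proof
  fix c assume "c \<in> mat_image_ZL L p q r t"
  then obtain x y where c: "c = ((p * x + q * y) mod L, (r * x + t * y) mod L)"
    using mat_image_ZL_conv_all_int[OF assms(1)] by blast
  have "p * x + q * y = p' * (u * x + v * y) + q' * (w * x + z * y)"
    "r * x + t * y = r' * (u * x + v * y) + t' * (w * x + z * y)"
    using assms(2-5) by (simp_all add: algebra_simps)
  then show "c \<in> mat_image_ZL L p' q' r' t'"
    unfolding c mat_image_ZL_conv_all_int[OF assms(1)] by auto
qed

theorem proposition2p2:
  fixes L a b s k1 k2 :: int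
  assumes "L > 0"
    and "a dvd L" and "b dvd L"
    and "0 \<le> s" and "s < b"
    and "((a * b) div gcd (a * b) L) dvd s"
    and "k1 * s + k2 * b = gcd b s"
  shows "mat_image_ZL L a 0 s b =
         mat_image_ZL L ((a * b) div gcd b s) (k1 * a) 0 (gcd b s)"
proof -
  define g where "g = gcd b s"
  have "g > 0" using assms(4,5) unfolding g_def by simp
  obtain b' where b': "b = g * b'" unfolding g_def by (meson gcd_dvd1 dvdE)
  obtain s' where s': "s = g * s'" unfolding g_def by (meson gcd_dvd2 dvdE)
  have "g * (k1 * s' + k2 * b') = g * 1"
    using assms(7) b' s' unfolding g_def[symmetric] by (simp add: algebra_simps)
  with \<open>g > 0\<close> have bezout: "k1 * s' + k2 * b' = 1" by simp
  have "a = a * (k1 * s' + k2 * b')" by (simp add: bezout)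
  also have "\<dots> = a * b' * k2 + k1 * a * s'" by (simp add: algebra_simps)
  finally have a_eq: "a = a * b' * k2 + k1 * a * s'" .
  have "mat_image_ZL L a 0 s b \<subseteq> mat_image_ZL L (a * b') (k1 * a) 0 g"
    by (rule mat_image_ZL_mult_right_subset[where v = "- k1" and z = b', OF assms(1) a_eq])
      (simp_all add: b' s')
  moreover have "mat_image_ZL L (a * b') (k1 * a) 0 g \<subseteq> mat_image_ZL L a 0 s b"
  proof -
    have g_eq: "g = s * k1 + b * k2" using assms(7) unfolding g_def by (simp add: mult.commute)
    show ?thesis
      by (rule mat_image_ZL_mult_right_subset[where u = b' and w = "- s'", OF assms(1) _ _ _ g_eq])
        (simp_all add: b' s')
  qed
  moreover have "(a * b) div g = a * b'" using b' \<open>g > 0\<close> by simp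
  ultimately show ?thesis unfolding g_def[symmetric] by auto
qed

end
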